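(* Let $q$ be a prime power and $n,t,m$ positive integers with $t\geq m$. Let $\ell$ be a positive integer such that $$ e \left[ {\ell \choose t} - { \ell-t \choose t} \right] \left(\frac{m}{q}\right)^{n} \leq 1,$$ where $e$ is Euler's number and ${\ell-t \choose t}$ is set to zero if $\ell < 2t$. Then $EGZ(t,\mathbb{F}_q^{n},m) > \ell$.
   Context: $\mathbb{F}_q^n$ is viewed as a commutative ring with coordinatewise operations. For elements $g_1,\dots,g_t$ of a commutative ring $R$, $e_m(g_1,\dots,g_t)=\sum_{1\leq i_1<\cdots<i_m\leq t}\prod_{j=1}^m g_{i_j}$. A sequence over $R$ is a finite list of elements of $R$ (repetitions allowed); a subsequence of length $t$ is obtained by choosing $t$ distinct positions. For a finite commutative ring $R$, $EGZ(t,R,m)$ is the smallest positive integer $\ell$ such that every sequence $S$ over $R$ of length $|S|\geq \ell$ contains a subsequence $S'$ of length $t$ with $e_m(S')=0$ in $R$; if no such $\ell$ exists, $EGZ(t,R,m)=\infty$. *)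

theory Defs
  imports "HOL-Analysis.Analysis" "HOL-Library.Extended_Nat"
begin

definition esym :: "nat \<Rightarrow> 'r::comm_ring_1 list \<Rightarrow> nat set \<Rightarrow> 'r" where
  "esym m S I = (\<Sum>J\<in>{J. J \<subseteq> I \<and> card J = m}. \<Prod>j\<in>J. S ! j)"

definition egz_prop :: "nat \<Rightarrow> 'r::comm_ring_1 itself \<Rightarrow> nat \<Rightarrow> nat \<Rightarrow> bool" where
  "egz_prop t R m l \<longleftrightarrow>
     (\<forall>S::'r list. length S \<ge> l \<longrightarrow>
        (\<exists>I. I \<subseteq> {..<length S} \<and> card I = t \<and> esym m S I = 0))"

definition EGZ :: "nat \<Rightarrow> 'r::comm_ring_1 itself \<Rightarrow> nat \<Rightarrow> enat" where
  "EGZ t R m = (if \<exists>l>0. egz_prop t R m l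
                then enat (LEAST l. l > 0 \<and> egz_prop t R m l) else \<infinity>)"

end

theory Submission
  imports Defs
begin

text \<open>The proof is the Lovasz Local Lemma.  Choose the \<open>l\<close> terms of a sequence in
  \<open>\<bbbF>\<^sub>q\<^sup>n\<close> independently and uniformly at random.  For a \<open>t\<close>-set \<open>I\<close> of positions,
  \<open>e\<^sub>m\<close> of the chosen terms vanishes iff it vanishes in each of the \<open>n\<close> coordinates; these
  coordinate events are independent, and each is the vanishing of a nonzero multilinear polynomial
  of degree \<open>m\<close>, which by Schwartz--Zippel has probability at most \<open>m/q\<close>.  So the bad event
  for \<open>I\<close> has probability at most \<open>p = (m/q)\<^sup>n\<close>, and it is mutually independent of the bad
  events of all \<open>t\<close>-sets disjoint from \<open>I\<close>; the \<open>t\<close>-sets meeting \<open>I\<close> number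
  \<open>D = C(l, t) - C(l - t, t)\<close>.  Hence \<open>e p D \<le> 1\<close> leaves, with positive probability, a sequence
  of length \<open>l\<close> none of whose \<open>t\<close>-subsequences has vanishing \<open>e\<^sub>m\<close>.  Probabilities are
  replaced throughout by counting points of the finite product space.\<close>

section \<open>Independence in finite product spaces\<close>

definition depends_only_on :: "('y \<Rightarrow> 'a) set \<Rightarrow> ('y \<Rightarrow> 'a) set \<Rightarrow> 'y set \<Rightarrow> bool" where
  "depends_only_on \<Omega> E Z \<longleftrightarrow>
     (\<forall>f\<in>\<Omega>. \<forall>g\<in>\<Omega>. (\<forall>z\<in>Z. f z = g z) \<longrightarrow> (f \<in> E \<longleftrightarrow> g \<in> E))"

lemma depends_only_on_space: "depends_only_on \<Omega> \<Omega> Z"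
  unfolding depends_only_on_def by auto

lemma depends_only_onI:
  assumes "\<And>f g. f \<in> \<Omega> \<Longrightarrow> g \<in> \<Omega> \<Longrightarrow> (\<And>z. z \<in> Z \<Longrightarrow> f z = g z) \<Longrightarrow> g \<in> E \<Longrightarrow> f \<in> E"
  shows "depends_only_on \<Omega> E Z"
  unfolding depends_only_on_def using assms by metis

lemma depends_only_onD:
  assumes "depends_only_on \<Omega> E Z" and "f \<in> \<Omega>" and "g \<in> \<Omega>" and "g \<in> E"
    and "\<And>z. z \<in> Z \<Longrightarrow> f z = g z"
  shows "f \<in> E"
  using assms unfolding depends_only_on_def by metis

lemma card_Int_eq_mult_card_restrict:
  assumes \<Omega>: "\<Omega> = PiE Y B" and "Z \<subseteq> Y" and "E \<subseteq> \<Omega>" and "F \<subseteq> \<Omega>"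
    and E: "depends_only_on \<Omega> E Z" and F: "depends_only_on \<Omega> F (Y - Z)"
  shows "card (E \<inter> F) = card ((\<lambda>f. restrict f Z) ` E) * card ((\<lambda>f. restrict f (Y - Z)) ` F)"
proof -
  define restrict_pair where "restrict_pair f = (restrict f Z, restrict f (Y - Z))" for f :: "'a \<Rightarrow> 'b"
  have "inj_on restrict_pair \<Omega>"
  proof (rule inj_onI)
    fix f g assume "f \<in> \<Omega>" "g \<in> \<Omega>" "restrict_pair f = restrict_pair g"
    then show "f = g"
      using \<open>Z \<subseteq> Y\<close> unfolding \<Omega> restrict_pair_def
      by (intro PiE_ext[of f Y B g]) (auto simp: fun_eq_iff restrict_def split: if_splits)
  qed
  moreover have "restrict_pair ` (E \<inter> F) = (\<lambda>f. restrict f Z) ` E \<times> (\<lambda>f. restrict f (Y - Z)) ` F"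
  proof
    show "restrict_pair ` (E \<inter> F) \<subseteq> (\<lambda>f. restrict f Z) ` E \<times> (\<lambda>f. restrict f (Y - Z)) ` F"
      unfolding restrict_pair_def by auto
  next
    show "(\<lambda>f. restrict f Z) ` E \<times> (\<lambda>f. restrict f (Y - Z)) ` F \<subseteq> restrict_pair ` (E \<inter> F)"
    proof clarify
      fix e f assume "e \<in> E" "f \<in> F"
      define w where "w y = (if y \<in> Z then e y else f y)" for y
      have "e \<in> \<Omega>" "f \<in> \<Omega>" using \<open>e \<in> E\<close> \<open>f \<in> F\<close> \<open>E \<subseteq> \<Omega>\<close> \<open>F \<subseteq> \<Omega>\<close> by auto
      then have "w \<in> \<Omega>" using \<open>Z \<subseteq> Y\<close> unfolding w_def \<Omega> by (auto simp: PiE_def extensional_def)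
      have "w \<in> E" using E \<open>w \<in> \<Omega>\<close> \<open>e \<in> \<Omega>\<close> \<open>e \<in> E\<close> by (rule depends_only_onD) (simp add: w_def)
      moreover have "w \<in> F" using F \<open>w \<in> \<Omega>\<close> \<open>f \<in> \<Omega>\<close> \<open>f \<in> F\<close> by (rule depends_only_onD) (simp add: w_def)
      moreover have "restrict_pair w = (restrict e Z, restrict f (Y - Z))"
        unfolding restrict_pair_def w_def by (auto simp: restrict_def fun_eq_iff)
      ultimately show "(restrict e Z, restrict f (Y - Z)) \<in> restrict_pair ` (E \<inter> F)"
        by (metis IntI image_eqI)
    qed
  qed
  ultimately show ?thesis
    using \<open>E \<subseteq> \<Omega>\<close> by (metis card_cartesian_product card_image inj_on_subset le_infI1)
qed

lemma card_Int_mult_card_eq: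
  assumes \<Omega>: "\<Omega> = PiE Y B" and "Z \<subseteq> Y" and "E \<subseteq> \<Omega>" and "F \<subseteq> \<Omega>"
    and E: "depends_only_on \<Omega> E Z" and F: "depends_only_on \<Omega> F (Y - Z)"
  shows "card (E \<inter> F) * card \<Omega> = card E * card F"
proof -
  note restrict_pair = card_Int_eq_mult_card_restrict[OF \<Omega> \<open>Z \<subseteq> Y\<close>]
  have "card (E \<inter> F) = card ((\<lambda>f. restrict f Z) ` E) * card ((\<lambda>f. restrict f (Y - Z)) ` F)"
    by (rule restrict_pair) (use assms in auto)
  moreover have "card E = card ((\<lambda>f. restrict f Z) ` E) * card ((\<lambda>f. restrict f (Y - Z)) ` \<Omega>)"
    using restrict_pair[OF \<open>E \<subseteq> \<Omega>\<close> _ E depends_only_on_space] \<open>E \<subseteq> \<Omega>\<close> by (simp add: Int_absorb2)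
  moreover have "card F = card ((\<lambda>f. restrict f Z) ` \<Omega>) * card ((\<lambda>f. restrict f (Y - Z)) ` F)"
    using restrict_pair[OF _ \<open>F \<subseteq> \<Omega>\<close> depends_only_on_space F] \<open>F \<subseteq> \<Omega>\<close> by (simp add: Int_absorb1)
  moreover have "card \<Omega> = card ((\<lambda>f. restrict f Z) ` \<Omega>) * card ((\<lambda>f. restrict f (Y - Z)) ` \<Omega>)"
    using restrict_pair[OF _ _ depends_only_on_space depends_only_on_space] by simp
  ultimately show ?thesis by (simp add: ac_simps)
qed

lemma card_Int_le_if_depends_only_on:
  assumes \<Omega>: "\<Omega> = PiE Y B" and "finite \<Omega>" and "Z \<subseteq> Y" and "E \<subseteq> \<Omega>" and "F \<subseteq> \<Omega>"
    and "depends_only_on \<Omega> E Z" and "depends_only_on \<Omega> F (Y - Z)"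
    and E_le: "real (card E) \<le> p * real (card \<Omega>)"
  shows "real (card (E \<inter> F)) \<le> p * real (card F)"
proof (cases "\<Omega> = {}")
  case True
  then show ?thesis using \<open>E \<subseteq> \<Omega>\<close> \<open>F \<subseteq> \<Omega>\<close> by simp
next
  case False
  then have "real (card \<Omega>) > 0" using \<open>finite \<Omega>\<close> by (simp add: card_gt_0_iff)
  have "real (card (E \<inter> F)) * real (card \<Omega>) = real (card E) * real (card F)"
    using card_Int_mult_card_eq[OF assms(1,3-7)] by (metis of_nat_mult)
  also have "\<dots> \<le> p * real (card \<Omega>) * real (card F)"
    using E_le by (intro mult_right_mono) auto
  also have "\<dots> = p * real (card F) * real (card \<Omega>)"
    by simp
  finally show ?thesis using \<open>real (card \<Omega>) > 0\<close> by simp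
qed

text \<open>No algebraic structure is needed: \<open>(w, c) \<mapsto> w(y := c)\<close> is a bijection with inverse
  \<open>w \<mapsto> (w(y := g w), w y)\<close>.\<close>
lemma card_coordinate_eq_mult_CARD:
  fixes g :: "('y \<Rightarrow> 'a::finite) \<Rightarrow> 'a"
  assumes \<Omega>: "\<Omega> = PiE Y (\<lambda>_. UNIV)" and "y \<in> Y"
    and g: "\<And>w c. w \<in> \<Omega> \<Longrightarrow> g (w(y := c)) = g w"
  shows "card {w\<in>\<Omega>. w y = g w} * CARD('a) = card \<Omega>"
proof -
  have upd: "w(y := c) \<in> \<Omega>" if "w \<in> \<Omega>" for w c
    using that \<open>y \<in> Y\<close> unfolding \<Omega> by (auto simp: PiE_def extensional_def)
  have "bij_betw (\<lambda>(w, c). w(y := c)) ({w\<in>\<Omega>. w y = g w} \<times> UNIV) \<Omega>"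
  proof (rule bij_betw_byWitness[where f' = "\<lambda>w. (w(y := g w), w y)"])
    show "(\<lambda>(w, c). w(y := c)) ` ({w\<in>\<Omega>. w y = g w} \<times> UNIV) \<subseteq> \<Omega>"
      using upd by auto
    show "(\<lambda>w. (w(y := g w), w y)) ` \<Omega> \<subseteq> {w\<in>\<Omega>. w y = g w} \<times> UNIV"
      using upd g by auto
  qed (use g in auto)
  then show ?thesis
    using bij_betw_same_card by (fastforce simp: card_cartesian_product)
qed

section \<open>Zeros of elementary symmetric polynomials\<close>

definition elem_sym :: "nat \<Rightarrow> ('i \<Rightarrow> 'a::comm_ring_1) \<Rightarrow> 'i set \<Rightarrow> 'a" where
  "elem_sym m v I = (\<Sum>J\<in>{J. J \<subseteq> I \<and> card J = m}. \<Prod>j\<in>J. v j)"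

lemma elem_sym_0:
  assumes "finite I"
  shows "elem_sym 0 v I = 1"
proof -
  have "{J. J \<subseteq> I \<and> card J = 0} = {{}}"
    using assms by (auto dest: finite_subset)
  then show ?thesis
    unfolding elem_sym_def by simp
qed

lemma elem_sym_cong: "(\<And>i. i \<in> I \<Longrightarrow> v i = v' i) \<Longrightarrow> elem_sym m v I = elem_sym m v' I"
  unfolding elem_sym_def by (intro sum.cong refl prod.cong) auto

lemma subsets_card_Suc_insert:
  assumes "finite I" and "j \<notin> I"
  shows "{J. J \<subseteq> insert j I \<and> card J = Suc m} =
    {J. J \<subseteq> I \<and> card J = Suc m} \<union> insert j ` {J. J \<subseteq> I \<and> card J = m}"
proof (intro equalityI subsetI)
  fix J assume J: "J \<in> {J. J \<subseteq> insert j I \<and> card J = Suc m}"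
  then have "finite J" using assms finite_subset by blast
  show "J \<in> {J. J \<subseteq> I \<and> card J = Suc m} \<union> insert j ` {J. J \<subseteq> I \<and> card J = m}"
  proof (cases "j \<in> J")
    case True
    then have "J = insert j (J - {j})" and "J - {j} \<subseteq> I" and "card (J - {j}) = m"
      using J \<open>finite J\<close> by auto
    then show ?thesis by blast
  qed (use J in auto)
next
  fix J assume "J \<in> {J. J \<subseteq> I \<and> card J = Suc m} \<union> insert j ` {J. J \<subseteq> I \<and> card J = m}"
  then show "J \<in> {J. J \<subseteq> insert j I \<and> card J = Suc m}"
    using assms by (auto simp: subset_iff) (metis card_insert_disjoint finite_subset subsetI)
qed

lemma elem_sym_insert:
  assumes "finite I" and "j \<notin> I"
  shows "elem_sym (Suc m) v (insert j I) = v j * elem_sym m v I + elem_sym (Suc m) v I"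
proof -
  have "inj_on (insert j) {J. J \<subseteq> I \<and> card J = m}"
    using assms by (auto simp: inj_on_def)
  moreover have "prod v (insert j J) = v j * prod v J" if "J \<subseteq> I" for J
    using that assms by (subst prod.insert) (auto dest: finite_subset)
  moreover have "{J. J \<subseteq> I \<and> card J = Suc m} \<inter> insert j ` {J. J \<subseteq> I \<and> card J = m} = {}"
    using assms by auto
  ultimately show ?thesis
    unfolding elem_sym_def subsets_card_Suc_insert[OF assms] using \<open>finite I\<close>
    by (simp add: sum.union_disjoint sum.reindex sum_distrib_left add.commute)
qed

text \<open>Schwartz--Zippel for \<open>e\<^sub>m\<close>: being multilinear, \<open>e\<^sub>m\<close> can only vanish if the
  coefficient \<open>e\<^sub>m\<^sub>-\<^sub>1\<close> of the new variable does, or if that variable takes the single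
  value determined by the others.\<close>
lemma card_elem_sym_eq_0_le:
  fixes \<sigma> :: "'i \<Rightarrow> 'y"
  assumes \<Omega>: "\<Omega> = PiE Y (\<lambda>_. UNIV :: 'a::{field,finite} set)" and "finite Y"
    and "finite I" and "inj_on \<sigma> I" and "\<sigma> ` I \<subseteq> Y" and "m \<le> card I"
  shows "card {w\<in>\<Omega>. elem_sym m (\<lambda>i. w (\<sigma> i)) I = 0} * CARD('a) \<le> m * card \<Omega>"
  using \<open>finite I\<close> \<open>inj_on \<sigma> I\<close> \<open>\<sigma> ` I \<subseteq> Y\<close> \<open>m \<le> card I\<close>
proof (induction I arbitrary: m rule: finite_induct)
  case empty
  then show ?case by (simp add: elem_sym_0)
next
  case (insert j I)
  show ?case
  proof (cases m)
    case 0
    then show ?thesis using insert.hyps by (simp add: elem_sym_0)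
  next
    case (Suc m')
    let ?e = "\<lambda>k w. elem_sym k (\<lambda>i. w (\<sigma> i)) I"
    define g where "g w = - ?e (Suc m') w / ?e m' w" for w :: "'y \<Rightarrow> 'a"
    have "\<sigma> j \<notin> \<sigma> ` I" and "\<sigma> j \<in> Y"
      using insert.prems insert.hyps by auto
    have g_upd: "g (w(\<sigma> j := c)) = g w" for w c
    proof -
      have "?e k (w(\<sigma> j := c)) = ?e k w" for k
        using \<open>\<sigma> j \<notin> \<sigma> ` I\<close> by (intro elem_sym_cong) (metis fun_upd_other image_eqI)
      then show ?thesis by (simp add: g_def)
    qed
    have "w (\<sigma> j) = g w" if "w (\<sigma> j) * ?e m' w + ?e (Suc m') w = 0" and "?e m' w \<noteq> 0" for w
      using that by (simp add: g_def field_simps) (metis add.commute eq_neg_iff_add_eq_0)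
    then have sub: "{w\<in>\<Omega>. elem_sym m (\<lambda>i. w (\<sigma> i)) (insert j I) = 0}
        \<subseteq> {w\<in>\<Omega>. ?e m' w = 0} \<union> {w\<in>\<Omega>. w (\<sigma> j) = g w}"
      using insert.hyps by (auto simp: Suc elem_sym_insert)
    have "finite \<Omega>"
      unfolding \<Omega> using \<open>finite Y\<close> by (simp add: finite_PiE)
    have "card {w\<in>\<Omega>. elem_sym m (\<lambda>i. w (\<sigma> i)) (insert j I) = 0} * CARD('a)
        \<le> card ({w\<in>\<Omega>. ?e m' w = 0} \<union> {w\<in>\<Omega>. w (\<sigma> j) = g w}) * CARD('a)"
      using sub \<open>finite \<Omega>\<close> by (intro mult_le_mono1 card_mono) auto
    also have "\<dots> \<le> (card {w\<in>\<Omega>. ?e m' w = 0} + card {w\<in>\<Omega>. w (\<sigma> j) = g w}) * CARD('a)"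
      by (intro mult_le_mono1 card_Un_le)
    also have "\<dots> = card {w\<in>\<Omega>. ?e m' w = 0} * CARD('a) + card \<Omega>"
      using card_coordinate_eq_mult_CARD[OF \<Omega> \<open>\<sigma> j \<in> Y\<close>, of g] g_upd by (simp add: add_mult_distrib)
    also have "\<dots> \<le> m' * card \<Omega> + card \<Omega>"
      using insert.IH[of m'] insert.prems insert.hyps Suc by simp
    finally show ?thesis
      using Suc by simp
  qed
qed

lemma card_elem_sym_coordinates_eq_0_le:
  assumes \<Omega>: "\<Omega> = PiE Y (\<lambda>_. UNIV :: 'a::{field,finite} set)" and "finite Y"
    and "finite I" and "I \<times> K \<subseteq> Y" and "finite K" and "m \<le> card I"
  shows "real (card {w\<in>\<Omega>. \<forall>k\<in>K. elem_sym m (\<lambda>i. w (i, k)) I = 0})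
    \<le> (real m / CARD('a)) ^ card K * real (card \<Omega>)"
  using \<open>finite K\<close> \<open>I \<times> K \<subseteq> Y\<close>
proof (induction K rule: finite_induct)
  case empty
  then show ?case by simp
next
  case (insert k K)
  define C where "C = {w\<in>\<Omega>. elem_sym m (\<lambda>i. w (i, k)) I = 0}"
  define F where "F = {w\<in>\<Omega>. \<forall>k\<in>K. elem_sym m (\<lambda>i. w (i, k)) I = 0}"
  have "finite \<Omega>"
    unfolding \<Omega> using \<open>finite Y\<close> by (simp add: finite_PiE)
  have "card C * CARD('a) \<le> m * card \<Omega>"
    unfolding C_def using \<Omega> \<open>finite Y\<close> \<open>finite I\<close> _ _ \<open>m \<le> card I\<close>
    by (rule card_elem_sym_eq_0_le) (use insert.prems in \<open>auto simp: inj_on_def\<close>)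
  then have "real (card C) \<le> real m / CARD('a) * real (card \<Omega>)"
    by (simp add: field_simps flip: of_nat_mult)
  moreover have "depends_only_on \<Omega> C (I \<times> {k})"
    unfolding C_def by (intro depends_only_onI) (auto cong: elem_sym_cong)
  moreover have "depends_only_on \<Omega> F (Y - I \<times> {k})"
  proof (rule depends_only_onI)
    fix f g assume "f \<in> \<Omega>" and "g \<in> F" and fg: "\<And>z. z \<in> Y - I \<times> {k} \<Longrightarrow> f z = g z"
    have "elem_sym m (\<lambda>i. f (i, k')) I = elem_sym m (\<lambda>i. g (i, k')) I" if "k' \<in> K" for k'
      using that insert.hyps insert.prems by (intro elem_sym_cong fg) auto
    then show "f \<in> F" using \<open>f \<in> \<Omega>\<close> \<open>g \<in> F\<close> unfolding F_def by auto
  qed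
  ultimately have "real (card (C \<inter> F)) \<le> real m / CARD('a) * real (card F)"
    using insert.prems by (intro card_Int_le_if_depends_only_on[OF \<Omega> \<open>finite \<Omega>\<close>]) (auto simp: C_def F_def)
  also have "\<dots> \<le> real m / CARD('a) * ((real m / CARD('a)) ^ card K * real (card \<Omega>))"
    using insert.IH insert.prems unfolding F_def by (intro mult_left_mono) auto
  finally have "real (card (C \<inter> F)) \<le> (real m / CARD('a)) ^ Suc (card K) * real (card \<Omega>)"
    by (simp add: mult.assoc)
  moreover have "{w\<in>\<Omega>. \<forall>k'\<in>insert k K. elem_sym m (\<lambda>i. w (i, k')) I = 0} = C \<inter> F"
    by (auto simp: C_def F_def)
  ultimately show ?case
    using insert.hyps by simp
qed

section \<open>The Lovasz Local Lemma, by counting\<close>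

lemma card_avoid_Un_ge:
  fixes A :: "'i \<Rightarrow> 'w set"
  assumes "finite \<Omega>" and "x \<le> 1" and "finite W" and "U \<inter> W = {}"
    and cond: "\<And>V j. V \<subseteq> U \<union> W \<Longrightarrow> j \<in> W - V \<Longrightarrow>
      real (card (A j \<inter> (\<Omega> - \<Union>(A ` V)))) \<le> x * real (card (\<Omega> - \<Union>(A ` V)))"
  shows "(1 - x) ^ card W * real (card (\<Omega> - \<Union>(A ` U))) \<le> real (card (\<Omega> - \<Union>(A ` (U \<union> W))))"
  using \<open>finite W\<close> \<open>U \<inter> W = {}\<close> cond
proof (induction W rule: finite_induct)
  case empty
  then show ?case by simp
next
  case (insert j W)
  let ?B = "\<lambda>T. \<Omega> - \<Union>(A ` T)"
  have IH: "(1 - x) ^ card W * real (card (?B U)) \<le> real (card (?B (U \<union> W)))"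
    using insert.IH insert.prems by blast
  have cond_j: "real (card (A j \<inter> ?B (U \<union> W))) \<le> x * real (card (?B (U \<union> W)))"
    by (rule insert.prems(2)) (use insert.hyps insert.prems(1) in auto)
  have "?B (U \<union> insert j W) = ?B (U \<union> W) - A j"
    by auto
  then have card_split: "card (?B (U \<union> W)) = card (A j \<inter> ?B (U \<union> W)) + card (?B (U \<union> insert j W))"
    using \<open>finite \<Omega>\<close> card_Int_Diff[of "?B (U \<union> W)" "A j"] by (simp add: Int_commute)
  have "(1 - x) ^ card (insert j W) * real (card (?B U)) = (1 - x) * ((1 - x) ^ card W * real (card (?B U)))"
    using insert.hyps by simp
  also have "\<dots> \<le> (1 - x) * real (card (?B (U \<union> W)))"
    using IH \<open>x \<le> 1\<close> by (intro mult_left_mono) auto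
  also have "\<dots> \<le> real (card (?B (U \<union> insert j W)))"
    using cond_j card_split by (simp add: algebra_simps)
  finally show ?case .
qed

text \<open>The neighbours of \<open>i\<close> in \<open>T\<close> are split off: \<open>A i\<close> is independent of the rest of \<open>T\<close>,
  and by induction avoiding the at most \<open>D - 1\<close> neighbours costs at most a factor
  \<open>(1 - x) ^ (D - 1)\<close>.\<close>
lemma lll_conditional_card_le:
  fixes A :: "'i \<Rightarrow> 'w set" and N :: "'i \<Rightarrow> 'i set"
  assumes "finite \<Omega>" and "finite Is" and "0 \<le> x" and "x \<le> 1"
    and p_le: "p \<le> x * (1 - x) ^ (D - 1)"
    and N_refl: "\<And>i. i \<in> Is \<Longrightarrow> i \<in> N i"
    and N_card: "\<And>i. i \<in> Is \<Longrightarrow> card (N i \<inter> Is) \<le> D"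
    and indep: "\<And>i T. i \<in> Is \<Longrightarrow> T \<subseteq> Is \<Longrightarrow> T \<inter> N i = {} \<Longrightarrow>
        real (card (A i \<inter> (\<Omega> - \<Union>(A ` T)))) \<le> p * real (card (\<Omega> - \<Union>(A ` T)))"
    and "T \<subseteq> Is" and "i \<in> Is - T"
  shows "real (card (A i \<inter> (\<Omega> - \<Union>(A ` T)))) \<le> x * real (card (\<Omega> - \<Union>(A ` T)))"
  using \<open>T \<subseteq> Is\<close> \<open>i \<in> Is - T\<close>
proof (induction "card T" arbitrary: T i rule: less_induct)
  case less
  let ?B = "\<lambda>T. \<Omega> - \<Union>(A ` T)"
  define T1 where "T1 = T \<inter> N i"
  define T2 where "T2 = T - N i"
  have "finite T"
    using less.prems \<open>finite Is\<close> finite_subset by blast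
  have "card T1 \<le> card (N i \<inter> Is - {i})"
    using less.prems \<open>finite Is\<close> unfolding T1_def by (intro card_mono) auto
  also have "\<dots> \<le> D - 1"
    using less.prems N_refl N_card by (simp add: diff_le_mono)
  finally have "card T1 \<le> D - 1" .
  have "(1 - x) ^ card T1 * real (card (?B T2)) \<le> real (card (?B (T2 \<union> T1)))"
  proof (rule card_avoid_Un_ge)
    fix V j assume "V \<subseteq> T2 \<union> T1" and "j \<in> T1 - V"
    then have "V \<subset> T" by (auto simp: T1_def T2_def)
    then have "card V < card T"
      using \<open>finite T\<close> by (simp add: psubset_card_mono)
    moreover have "V \<subseteq> Is" and "j \<in> Is - V"
      using \<open>V \<subset> T\<close> \<open>j \<in> T1 - V\<close> less.prems by (auto simp: T1_def)
    ultimately show "real (card (A j \<inter> ?B V)) \<le> x * real (card (?B V))"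
      by (rule less.hyps)
  qed (use \<open>finite \<Omega>\<close> \<open>x \<le> 1\<close> \<open>finite T\<close> in \<open>auto simp: T1_def T2_def\<close>)
  then have growth: "(1 - x) ^ card T1 * real (card (?B T2)) \<le> real (card (?B T))"
    by (simp add: T1_def T2_def Un_Diff_Int)
  have "real (card (A i \<inter> ?B T)) \<le> real (card (A i \<inter> ?B T2))"
    using \<open>finite \<Omega>\<close> by (intro of_nat_mono card_mono) (auto simp: T2_def)
  also have "\<dots> \<le> p * real (card (?B T2))"
    using less.prems by (intro indep) (auto simp: T2_def)
  also have "\<dots> \<le> x * (1 - x) ^ (D - 1) * real (card (?B T2))"
    using p_le by (intro mult_right_mono) auto
  also have "\<dots> \<le> x * ((1 - x) ^ card T1 * real (card (?B T2)))"
    using \<open>card T1 \<le> D - 1\<close> \<open>0 \<le> x\<close> \<open>x \<le> 1\<close>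
    by (simp add: mult.assoc mult_left_mono mult_right_mono power_decreasing)
  also have "\<dots> \<le> x * real (card (?B T))"
    using growth \<open>0 \<le> x\<close> by (rule mult_left_mono)
  finally show ?case .
qed

lemma lll_weight_bound:
  assumes "D \<ge> 1" and "exp 1 * real D * p \<le> 1"
  shows "p \<le> 1 / (real D + 1) * (1 - 1 / (real D + 1)) ^ (D - 1)"
proof -
  have "D > 0" and D: "Suc (D - 1) = D"
    using \<open>D \<ge> 1\<close> by auto
  have "(1 + 1 / real D) ^ D \<le> exp 1"
    using exp_ge_one_plus_x_over_n_power_n[of D 1] \<open>D > 0\<close> by simp
  then have "real D * (1 + 1 / real D) ^ D \<le> exp 1 * real D"
    by (simp add: mult.commute mult_left_mono)
  have "p \<le> 1 / (exp 1 * real D)"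
    using assms by (simp add: pos_le_divide_eq mult.commute)
  also have "\<dots> \<le> 1 / (real D * (1 + 1 / real D) ^ D)"
    using \<open>real D * (1 + 1 / real D) ^ D \<le> exp 1 * real D\<close> \<open>D > 0\<close>
    by (intro divide_left_mono) (auto intro!: mult_pos_pos zero_less_power add_pos_nonneg)
  also have "\<dots> = 1 / (real D + 1) * (1 - 1 / (real D + 1)) ^ (D - 1)"
  proof -
    have "1 / (a * (1 + 1 / a) ^ Suc d) = 1 / (a + 1) * (1 - 1 / (a + 1)) ^ d" if "a > 0" for a :: real and d
    proof -
      have "1 + 1 / a = (a + 1) / a" and "1 - 1 / (a + 1) = a / (a + 1)"
        using that by (simp_all add: field_simps)
      with that show ?thesis by (simp only:) (simp add: divide_simps)
    qed
    from this[of "real D" "D - 1"] show ?thesis using D \<open>D > 0\<close> by simp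
  qed
  finally show ?thesis .
qed

text \<open>\<open>N i\<close> is the closed neighbourhood of \<open>i\<close> in the dependency graph, so \<open>D\<close> is one more
  than the maximal degree \<open>d\<close> of the usual formulation \<open>e p (d + 1) \<le> 1\<close>.\<close>
lemma lovasz_local_lemma_counting:
  fixes A :: "'i \<Rightarrow> 'w set" and N :: "'i \<Rightarrow> 'i set"
  assumes "finite \<Omega>" and "\<Omega> \<noteq> {}" and "finite Is" and "exp 1 * real D * p \<le> 1"
    and N_refl: "\<And>i. i \<in> Is \<Longrightarrow> i \<in> N i"
    and N_card: "\<And>i. i \<in> Is \<Longrightarrow> card (N i \<inter> Is) \<le> D"
    and indep: "\<And>i T. i \<in> Is \<Longrightarrow> T \<subseteq> Is \<Longrightarrow> T \<inter> N i = {} \<Longrightarrow>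
        real (card (A i \<inter> (\<Omega> - \<Union>(A ` T)))) \<le> p * real (card (\<Omega> - \<Union>(A ` T)))"
  shows "\<Omega> - \<Union>(A ` Is) \<noteq> {}"
proof (cases "Is = {}")
  case False
  then obtain i where "i \<in> Is" by blast
  then have "card (N i \<inter> Is) > 0"
    using N_refl \<open>finite Is\<close> by (auto simp: card_gt_0_iff)
  then have "D \<ge> 1"
    using N_card[OF \<open>i \<in> Is\<close>] by linarith
  define x where "x = 1 / (real D + 1)"
  have "0 \<le> x" and "x < 1"
    using \<open>D \<ge> 1\<close> by (auto simp: x_def)
  have "p \<le> x * (1 - x) ^ (D - 1)"
    unfolding x_def using \<open>D \<ge> 1\<close> assms(4) by (rule lll_weight_bound)
  have cond: "real (card (A j \<inter> (\<Omega> - \<Union>(A ` V)))) \<le> x * real (card (\<Omega> - \<Union>(A ` V)))"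
    if "V \<subseteq> Is" and "j \<in> Is - V" for V j
    by (rule lll_conditional_card_le[OF \<open>finite \<Omega>\<close> \<open>finite Is\<close> \<open>0 \<le> x\<close> less_imp_le[OF \<open>x < 1\<close>]
          \<open>p \<le> x * (1 - x) ^ (D - 1)\<close> N_refl N_card indep that])
  have "(1 - x) ^ card Is * real (card (\<Omega> - \<Union>(A ` {}))) \<le> real (card (\<Omega> - \<Union>(A ` ({} \<union> Is))))"
    by (rule card_avoid_Un_ge[OF \<open>finite \<Omega>\<close> less_imp_le[OF \<open>x < 1\<close>] \<open>finite Is\<close>]) (simp_all add: cond)
  moreover have "(1 - x) ^ card Is * real (card \<Omega>) > 0"
    using \<open>x < 1\<close> \<open>finite \<Omega>\<close> \<open>\<Omega> \<noteq> {}\<close> by (simp add: card_gt_0_iff)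
  ultimately have "card (\<Omega> - \<Union>(A ` Is)) > 0"
    by simp
  then show ?thesis
    by force
qed (use \<open>\<Omega> \<noteq> {}\<close> in simp)

section \<open>Long sequences without zero-sum subsequences\<close>

lemma prod_component:
  fixes f :: "'b \<Rightarrow> ('a::comm_monoid_mult) ^ 'n"
  shows "(prod f S) $ i = prod (\<lambda>x. f x $ i) S"
  by (induction S rule: infinite_finite_induct) simp_all

lemma esym_component: "esym m S I $ k = elem_sym m (\<lambda>j. S ! j $ k) I"
  unfolding esym_def elem_sym_def sum_component prod_component ..

lemma card_subsets_meeting:
  assumes "finite X" and "I \<subseteq> X" and "card I = t"
  shows "card {J. J \<subseteq> X \<and> card J = t \<and> J \<inter> I \<noteq> {}} = (card X choose t) - ((card X - t) choose t)"
proof -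
  have "{J. J \<subseteq> X \<and> card J = t \<and> J \<inter> I \<noteq> {}} = {J. J \<subseteq> X \<and> card J = t} - {J. J \<subseteq> X - I \<and> card J = t}"
    by auto
  moreover have "card ({J. J \<subseteq> X \<and> card J = t} - {J. J \<subseteq> X - I \<and> card J = t})
      = card {J. J \<subseteq> X \<and> card J = t} - card {J. J \<subseteq> X - I \<and> card J = t}"
    using \<open>finite X\<close> by (intro card_Diff_subset) auto
  moreover have "card (X - I) = card X - t"
    using assms by (simp add: card_Diff_subset finite_subset)
  ultimately show ?thesis
    using \<open>finite X\<close> by (simp add: n_subsets)
qed

lemma egz_prop_mono: "egz_prop t R m l \<Longrightarrow> l \<le> l' \<Longrightarrow> egz_prop t R m l'"
  unfolding egz_prop_def by auto

lemma less_EGZ_if_not_egz_prop: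
  assumes "\<not> egz_prop t TYPE('r::comm_ring_1) m l"
  shows "enat l < EGZ t TYPE('r) m"
proof (cases "\<exists>l'>0. egz_prop t TYPE('r) m l'")
  case True
  define L where "L = (LEAST l'. l' > 0 \<and> egz_prop t TYPE('r) m l')"
  have "egz_prop t TYPE('r) m L"
    unfolding L_def using True by (metis (mono_tags, lifting) LeastI_ex)
  then have "l < L"
    using assms egz_prop_mono by (metis not_le_imp_less)
  then show ?thesis
    using True unfolding EGZ_def L_def by simp
next
  case False
  then show ?thesis
    unfolding EGZ_def by (subst if_not_P) auto
qed

text \<open>A point \<open>w\<close> of the space of \<open>l \<times> n\<close> arrays over the field encodes the sequence whose
  \<open>i\<close>-th term has coordinates \<open>w (i, k)\<close>.\<close>
definition esym_zero_event :: "(nat \<times> 'k \<Rightarrow> 'a::comm_ring_1) set \<Rightarrow> nat \<Rightarrow> nat set \<Rightarrow> (nat \<times> 'k \<Rightarrow> 'a) set" where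
  "esym_zero_event \<Omega> m I = {w\<in>\<Omega>. \<forall>k. elem_sym m (\<lambda>i. w (i, k)) I = 0}"

lemma card_esym_zero_event_Int_avoid_le:
  fixes I :: "nat set" and T :: "nat set set"
  assumes \<Omega>: "\<Omega> = PiE ({..<l} \<times> (UNIV :: 'k::finite set)) (\<lambda>_. UNIV :: 'a::{field,finite} set)"
    and "I \<subseteq> {..<l}" and "m \<le> card I" and T: "\<And>J. J \<in> T \<Longrightarrow> J \<subseteq> {..<l} \<and> J \<inter> I = {}"
  defines "E \<equiv> esym_zero_event \<Omega> m"
  shows "real (card (E I \<inter> (\<Omega> - \<Union>(E ` T))))
    \<le> (real m / CARD('a)) ^ CARD('k) * real (card (\<Omega> - \<Union>(E ` T)))"
proof (rule card_Int_le_if_depends_only_on[OF \<Omega>])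
  show "finite \<Omega>" and IY: "I \<times> UNIV \<subseteq> {..<l} \<times> UNIV"
    using \<open>I \<subseteq> {..<l}\<close> by (auto simp: \<Omega> finite_PiE)
  show "depends_only_on \<Omega> (E I) (I \<times> UNIV)"
    unfolding E_def esym_zero_event_def by (intro depends_only_onI) (auto cong: elem_sym_cong)
  show "depends_only_on \<Omega> (\<Omega> - \<Union>(E ` T)) ({..<l} \<times> UNIV - I \<times> UNIV)"
  proof (rule depends_only_onI)
    fix f g assume "f \<in> \<Omega>" and g: "g \<in> \<Omega> - \<Union>(E ` T)"
      and fg: "\<And>z. z \<in> {..<l} \<times> UNIV - I \<times> UNIV \<Longrightarrow> f z = g z"
    have "elem_sym m (\<lambda>i. f (i, k)) J = elem_sym m (\<lambda>i. g (i, k)) J" if "J \<in> T" for J k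
      using T[OF that] by (intro elem_sym_cong fg) auto
    then show "f \<in> \<Omega> - \<Union>(E ` T)"
      using \<open>f \<in> \<Omega>\<close> g by (auto simp: E_def esym_zero_event_def)
  qed
  have "finite I"
    using \<open>I \<subseteq> {..<l}\<close> finite_subset by blast
  then show "real (card (E I)) \<le> (real m / CARD('a)) ^ CARD('k) * real (card \<Omega>)"
    using card_elem_sym_coordinates_eq_0_le[OF \<Omega> _ _ IY] \<open>m \<le> card I\<close>
    by (simp add: E_def esym_zero_event_def)
qed (auto simp: E_def esym_zero_event_def)

lemma exists_list_esym_ne_0:
  assumes "1 \<le> m" and "m \<le> t"
    and "exp 1 * real ((l choose t) - ((l - t) choose t))
           * (real m / real CARD('a::{finite,field})) ^ CARD('n::finite) \<le> 1"
  shows "\<exists>S :: ('a ^ 'n) list. length S = l \<and> (\<forall>I. I \<subseteq> {..<l} \<and> card I = t \<longrightarrow> esym m S I \<noteq> 0)"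
proof -
  define \<Omega> where "\<Omega> = PiE ({..<l} \<times> (UNIV :: 'n set)) (\<lambda>_. UNIV :: 'a set)"
  define Is where "Is = {I. I \<subseteq> {..<l} \<and> card I = t}"
  define N where "N I = {J. J \<inter> I \<noteq> {}}" for I :: "nat set"
  have "finite \<Omega>" and "\<Omega> \<noteq> {}" and "finite Is"
    by (auto simp: \<Omega>_def Is_def finite_PiE PiE_eq_empty_iff finite_subset[of _ "Pow {..<l}"])
  have "I \<in> N I" if "I \<in> Is" for I
    using that \<open>1 \<le> m\<close> \<open>m \<le> t\<close> by (auto simp: N_def Is_def)
  moreover have "card (N I \<inter> Is) \<le> (l choose t) - ((l - t) choose t)" if "I \<in> Is" for I
  proof -
    have "N I \<inter> Is = {J. J \<subseteq> {..<l} \<and> card J = t \<and> J \<inter> I \<noteq> {}}"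
      by (auto simp: N_def Is_def)
    then show ?thesis
      using card_subsets_meeting[of "{..<l}" I t] that by (simp add: Is_def)
  qed
  moreover have "real (card (esym_zero_event \<Omega> m I \<inter> (\<Omega> - \<Union>(esym_zero_event \<Omega> m ` T))))
      \<le> (real m / CARD('a)) ^ CARD('n) * real (card (\<Omega> - \<Union>(esym_zero_event \<Omega> m ` T)))"
    if "I \<in> Is" and "T \<subseteq> Is" and "T \<inter> N I = {}" for I T
    using that \<open>m \<le> t\<close>
    by (intro card_esym_zero_event_Int_avoid_le[OF \<Omega>_def]) (auto simp: Is_def N_def)
  ultimately have "\<Omega> - \<Union>(esym_zero_event \<Omega> m ` Is) \<noteq> {}"
    using \<open>finite \<Omega>\<close> \<open>\<Omega> \<noteq> {}\<close> \<open>finite Is\<close> assms(3)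
    by (intro lovasz_local_lemma_counting[where N = N]) auto
  then obtain w where "w \<in> \<Omega>" and w: "\<And>I. I \<in> Is \<Longrightarrow> w \<notin> esym_zero_event \<Omega> m I"
    by blast
  define S where "S = map (\<lambda>i. \<chi> k. w (i, k)) [0..<l]"
  have "esym m S I \<noteq> 0" if I: "I \<subseteq> {..<l}" "card I = t" for I
  proof -
    obtain k where "elem_sym m (\<lambda>i. w (i, k)) I \<noteq> 0"
      using w[of I] \<open>w \<in> \<Omega>\<close> I by (auto simp: esym_zero_event_def Is_def)
    moreover have "esym m S I $ k = elem_sym m (\<lambda>j. S ! j $ k) I"
      by (rule esym_component)
    moreover have "\<dots> = elem_sym m (\<lambda>i. w (i, k)) I"
      using I by (intro elem_sym_cong) (auto simp: S_def)
    ultimately show ?thesis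
      by auto
  qed
  then show ?thesis
    by (intro exI[of _ S]) (simp add: S_def)
qed

theorem theorem2p4:
  fixes t m l :: nat
  assumes "m \<ge> 1" and "t \<ge> m" and "l \<ge> 1"
    and "exp 1 * (real (l choose t) - real (if l < 2 * t then 0 else (l - t) choose t))
           * (real m / real CARD('a::{finite,field})) ^ CARD('n::finite) \<le> 1"
  shows "EGZ t TYPE('a ^ 'n) m > enat l"
proof -
  have "(if l < 2 * t then 0 else (l - t) choose t) = (l - t) choose t"
    by (simp add: binomial_eq_0)
  then have "real (l choose t) - real (if l < 2 * t then 0 else (l - t) choose t)
      = real ((l choose t) - ((l - t) choose t))"
    by (simp add: binomial_right_mono)
  then obtain S :: "('a ^ 'n) list"
    where "length S = l" and "\<forall>I. I \<subseteq> {..<l} \<and> card I = t \<longrightarrow> esym m S I \<noteq> 0"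
    using exists_list_esym_ne_0[OF \<open>m \<ge> 1\<close> \<open>t \<ge> m\<close>] assms(4) by auto
  then have "\<not> egz_prop t TYPE('a ^ 'n) m l"
    unfolding egz_prop_def by auto
  then show ?thesis
    by (rule less_EGZ_if_not_egz_prop)
qed

end
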